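(* Let $F$ be a field, $n\ge3$, and let $x\mapsto\bar x$ be either the identity map of $F$ or a field automorphism of $F$ of order $2$ (applied entrywise to matrices). Let $G$ be the set of block matrices $\begin{pmatrix}a&b\\c&d\end{pmatrix}\in\mathrm{SL}_{2n}(F)$ ($n\times n$ blocks) satisfying $$a\bar d^T+b\bar c^T=1_n,\quad a\bar b^T+b\bar a^T=0,\quad c\bar d^T+d\bar c^T=0.$$ Let $V=\left\{\begin{pmatrix}1&k\\0&1\end{pmatrix}:\bar k^T=-k\right\}$, $V^T=\left\{\begin{pmatrix}1&0\\k&1\end{pmatrix}:\bar k^T=-k\right\}$ and $H=\left\{\begin{pmatrix}a^{-1}&0\\0&\bar a^T\end{pmatrix}:a\in\mathrm{GL}_n(F)\right\}$. Then $G=VV^TV(H\cap G)$. *)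

theory Defs
  imports "Jordan_Normal_Form.Determinant"
begin

definition field_aut :: "('a::field \<Rightarrow> 'a) \<Rightarrow> bool" where
  "field_aut \<sigma> \<longleftrightarrow> bij \<sigma> \<and> (\<forall>x y. \<sigma> (x + y) = \<sigma> x + \<sigma> y) \<and>
     (\<forall>x y. \<sigma> (x * y) = \<sigma> x * \<sigma> y) \<and> \<sigma> 1 = 1"

definition admissible_bar :: "('a::field \<Rightarrow> 'a) \<Rightarrow> bool" where
  "admissible_bar \<sigma> \<longleftrightarrow> \<sigma> = id \<or> (field_aut \<sigma> \<and> \<sigma> \<circ> \<sigma> = id \<and> \<sigma> \<noteq> id)"

definition ctr :: "('a \<Rightarrow> 'a) \<Rightarrow> 'a mat \<Rightarrow> 'a mat" where
  "ctr \<sigma> A = transpose_mat (map_mat \<sigma> A)"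

definition grpG :: "('a::field \<Rightarrow> 'a) \<Rightarrow> nat \<Rightarrow> 'a mat set" where
  "grpG \<sigma> n = {four_block_mat a b c d | a b c d.
      a \<in> carrier_mat n n \<and> b \<in> carrier_mat n n \<and> c \<in> carrier_mat n n \<and> d \<in> carrier_mat n n \<and>
      det (four_block_mat a b c d) = 1 \<and>
      a * ctr \<sigma> d + b * ctr \<sigma> c = 1\<^sub>m n \<and>
      a * ctr \<sigma> b + b * ctr \<sigma> a = 0\<^sub>m n n \<and>
      c * ctr \<sigma> d + d * ctr \<sigma> c = 0\<^sub>m n n}"

definition grpV :: "('a::field \<Rightarrow> 'a) \<Rightarrow> nat \<Rightarrow> 'a mat set" where
  "grpV \<sigma> n = {four_block_mat (1\<^sub>m n) k (0\<^sub>m n n) (1\<^sub>m n) | k.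
      k \<in> carrier_mat n n \<and> ctr \<sigma> k = - k}"

definition grpVT :: "('a::field \<Rightarrow> 'a) \<Rightarrow> nat \<Rightarrow> 'a mat set" where
  "grpVT \<sigma> n = {four_block_mat (1\<^sub>m n) (0\<^sub>m n n) k (1\<^sub>m n) | k.
      k \<in> carrier_mat n n \<and> ctr \<sigma> k = - k}"

definition grpH :: "('a::field \<Rightarrow> 'a) \<Rightarrow> nat \<Rightarrow> 'a mat set" where
  "grpH \<sigma> n = {four_block_mat ainv (0\<^sub>m n n) (0\<^sub>m n n) (ctr \<sigma> a) | a ainv.
      a \<in> carrier_mat n n \<and> ainv \<in> carrier_mat n n \<and>
      a * ainv = 1\<^sub>m n \<and> ainv * a = 1\<^sub>m n}"

end

theory Submission
  imports Defs
begin

text \<open>Write g \<in> G in n \<times> n blocks (a, b; c, d). If a has an inverse \<xi>, the defining relations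
  give g = (1, 0; c\<xi>, 1) (1, b a^*; 0, 1) (a, 0; 0, \<xi>^*) with c\<xi> and b a^* skew-hermitian, where
  M^* is the conjugate transpose. Left multiplication by (1, -k; 0, 1) \<in> V replaces a by a - k c, so it
  suffices to find a skew-hermitian k with a - k c invertible.

  Such a k is found by shrinking ker a step by step. For 0 \<noteq> y \<in> ker a the vector p = c y is
  nonzero and orthogonal to the range of a for the hermitian form u^* v; a skew-hermitian k
  supported on coordinates where p is nonzero then makes ker (a - k c) a proper subspace of
  ker a. If some t \<noteq> 0 has bar t = -t, take k = t E_ii. Otherwise the bar is the identity in
  characteristic \<noteq> 2 and k = E_il - E_li works unless ker a is a line. That case is excluded by
  det g = 1: exchanging a suitable column of a with the matching column of b would give a
  form-preserving matrix of determinant -1 with invertible corner, whereas the factorisation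
  above shows that such matrices have determinant 1.\<close>

locale square_blocks = fixes n :: nat
begin

abbreviation sq :: "'a mat \<Rightarrow> bool" where "sq A \<equiv> A \<in> carrier_mat n n"

abbreviation V_block :: "'a::field mat \<Rightarrow> 'a mat" where
  "V_block k \<equiv> four_block_mat (1\<^sub>m n) k (0\<^sub>m n n) (1\<^sub>m n)"
abbreviation VT_block :: "'a::field mat \<Rightarrow> 'a mat" where
  "VT_block k \<equiv> four_block_mat (1\<^sub>m n) (0\<^sub>m n n) k (1\<^sub>m n)"
abbreviation diag_block :: "'a::field mat \<Rightarrow> 'a mat \<Rightarrow> 'a mat" where
  "diag_block x y \<equiv> four_block_mat x (0\<^sub>m n n) (0\<^sub>m n n) y"

lemma sq_mult[simp]: "sq (A::'a::field mat) \<Longrightarrow> sq B \<Longrightarrow> sq (A * B)" by auto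
lemma sq_add[simp]: "sq A \<Longrightarrow> sq B \<Longrightarrow> sq (A + B)" by auto
lemma sq_diff[simp]: "sq A \<Longrightarrow> sq B \<Longrightarrow> sq (A - B)" by auto
lemma sq_uminus[simp]: "sq A \<Longrightarrow> sq (- A)" by auto
lemma m_assoc: "sq (A::'a::field mat) \<Longrightarrow> sq B \<Longrightarrow> sq D \<Longrightarrow> A * B * D = A * (B * D)"
  by (rule assoc_mult_mat)
lemma r_distr: "sq (A::'a::field mat) \<Longrightarrow> sq B \<Longrightarrow> sq D \<Longrightarrow> A * (B + D) = A * B + A * D"
  by (rule mult_add_distrib_mat)
lemma l_distr: "sq (A::'a::field mat) \<Longrightarrow> sq B \<Longrightarrow> sq D \<Longrightarrow> (A + B) * D = A * D + B * D"
  by (rule add_mult_distrib_mat)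
lemma diff_eq_add_uminus: "sq A \<Longrightarrow> sq B \<Longrightarrow> A - (B::'a::field mat) = A + - B"
  by (rule minus_add_uminus_mat)
lemma a_assoc: "sq A \<Longrightarrow> sq B \<Longrightarrow> sq D \<Longrightarrow> A + B + D = A + (B + (D::'a::field mat))"
  by (rule assoc_add_mat)
lemma a_comm: "sq A \<Longrightarrow> sq B \<Longrightarrow> A + B = B + (A::'a::field mat)"
  by (rule comm_add_mat)
lemma a_lcomm: "sq A \<Longrightarrow> sq B \<Longrightarrow> sq D \<Longrightarrow> A + (B + D) = B + (A + (D::'a::field mat))"
  by (metis a_assoc a_comm)
lemma minus_add: "sq A \<Longrightarrow> sq B \<Longrightarrow> - (A + B) = - A + - (B::'a::field mat)"
  by (rule eq_matI) auto
lemma r_neg: "sq A \<Longrightarrow> A + - A = (0\<^sub>m n n :: 'a::field mat)"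
  by (rule eq_matI) auto
lemma l_neg: "sq A \<Longrightarrow> - A + A = (0\<^sub>m n n :: 'a::field mat)"
  by (rule eq_matI) auto
lemma add_minus_cancel: "sq A \<Longrightarrow> sq B \<Longrightarrow> A + (- A + B) = (B :: 'a::field mat)"
  by (rule eq_matI) auto
lemma minus_add_cancel: "sq A \<Longrightarrow> sq B \<Longrightarrow> - A + (A + B) = (B :: 'a::field mat)"
  by (rule eq_matI) auto
lemma l_zero: "sq (A::'a::field mat) \<Longrightarrow> 0\<^sub>m n n + A = A" by auto
lemma r_zero: "sq (A::'a::field mat) \<Longrightarrow> A + 0\<^sub>m n n = A" by auto
lemma l_one: "sq (A::'a::field mat) \<Longrightarrow> 1\<^sub>m n * A = A" by auto
lemma r_one: "sq (A::'a::field mat) \<Longrightarrow> A * 1\<^sub>m n = A" by auto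
lemma l_null: "sq A \<Longrightarrow> 0\<^sub>m n n * A = (0\<^sub>m n n :: 'a::field mat)" by auto
lemma r_null: "sq A \<Longrightarrow> A * 0\<^sub>m n n = (0\<^sub>m n n :: 'a::field mat)" by auto
lemma l_minus: "sq A \<Longrightarrow> sq B \<Longrightarrow> - A * B = - ((A :: 'a::field mat) * B)" by simp
lemma r_minus: "sq A \<Longrightarrow> sq B \<Longrightarrow> A * - B = - ((A :: 'a::field mat) * B)" by simp
lemma minus_minus: "- (- (A :: 'a::field mat)) = A" by simp
lemma minus_zero: "- (0\<^sub>m n n) = (0\<^sub>m n n :: 'a::field mat)" by (rule eq_matI) auto

lemmas mat_ring_simps = m_assoc r_distr l_distr diff_eq_add_uminus a_assoc a_lcomm a_comm minus_add
  r_neg add_minus_cancel l_neg minus_add_cancel l_zero r_zero l_one r_one l_null r_null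
  l_minus r_minus minus_minus minus_zero

lemma eq_minus_if_add_eq_0: "sq (A::'a::field mat) \<Longrightarrow> sq B \<Longrightarrow> A + B = 0\<^sub>m n n \<Longrightarrow> A = - B"
  by (metis a_assoc r_neg sq_uminus r_zero l_zero)

lemma mult_four_block_sq:
  assumes "sq (A1::'a::field mat)" "sq B1" "sq C1" "sq D1" "sq A2" "sq B2" "sq C2" "sq D2"
  shows "four_block_mat A1 B1 C1 D1 * four_block_mat A2 B2 C2 D2
    = four_block_mat (A1 * A2 + B1 * C2) (A1 * B2 + B1 * D2) (C1 * A2 + D1 * C2) (C1 * B2 + D1 * D2)"
  by (rule mult_four_block_mat) (use assms in auto)

lemma four_block_mat_index:
  assumes "sq a" "sq b" "sq c" "sq d" "i < n" "j < n"
  shows "four_block_mat a b c d $$ (i,j) = a $$ (i,j)"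
    "four_block_mat a b c d $$ (i,j+n) = b $$ (i,j)"
    "four_block_mat a b c d $$ (i+n,j) = c $$ (i,j)"
    "four_block_mat a b c d $$ (i+n,j+n) = d $$ (i,j)"
  using assms by (subst index_mat_four_block; auto)+

lemma four_block_mat_inj:
  assumes "sq a" "sq b" "sq c" "sq d" "sq a'" "sq b'" "sq c'" "sq d'"
    and "four_block_mat a b c d = four_block_mat a' b' c' d'"
  shows "a = a' \<and> b = b' \<and> c = c' \<and> d = d'"
proof -
  have "a $$ (i,j) = a' $$ (i,j) \<and> b $$ (i,j) = b' $$ (i,j)
    \<and> c $$ (i,j) = c' $$ (i,j) \<and> d $$ (i,j) = d' $$ (i,j)" if "i < n" "j < n" for i j
    using four_block_mat_index[OF assms(1-4) that] four_block_mat_index[OF assms(5-8) that] assms(9)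
    by metis
  then show ?thesis using assms(1-8) by (intro conjI eq_matI) auto
qed

lemma mult_zero_vec_sq[simp]: "sq (M::'a::field mat) \<Longrightarrow> M *\<^sub>v 0\<^sub>v n = 0\<^sub>v n"
  by (rule eq_vecI) (auto simp: scalar_prod_def)

lemma mult_mat_vec_carrier_sq[simp]: "sq M \<Longrightarrow> v \<in> carrier_vec n \<Longrightarrow> M *\<^sub>v v \<in> carrier_vec n"
  by simp

lemma nonzero_vec_component: "p \<in> carrier_vec n \<Longrightarrow> p \<noteq> 0\<^sub>v n \<Longrightarrow> \<exists>i<n. p $ i \<noteq> 0"
  by (metis carrier_vecD eq_vecI index_zero_vec(1,2))

end

lemma column_support_shrink:
  fixes Y :: "'b::field mat"
  assumes Y: "Y \<in> carrier_mat n n" and YJ: "\<forall>r<n. \<forall>j<n. j \<notin> J \<longrightarrow> Y $$ (r,j) = 0"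
    and phi: "\<phi> \<in> carrier_vec n" and z0: "z0 \<in> carrier_vec n" and nz: "\<phi> \<bullet> (Y *\<^sub>v z0) \<noteq> 0"
  shows "\<exists>i\<in>J. \<exists>Y'\<in>carrier_mat n n. (\<forall>r<n. \<forall>j<n. j \<notin> J - {i} \<longrightarrow> Y' $$ (r,j) = 0) \<and>
     (\<forall>z\<in>carrier_vec n. \<phi> \<bullet> (Y *\<^sub>v z) = 0 \<longrightarrow> Y' *\<^sub>v z = Y *\<^sub>v z)"
proof -
  define \<psi> where "\<psi> = vec n (\<lambda>j. \<phi> \<bullet> col Y j)"
  have psi: "\<psi> \<bullet> z = \<phi> \<bullet> (Y *\<^sub>v z)" if z: "z \<in> carrier_vec n" for z
    unfolding \<psi>_def using assoc_scalar_prod[OF phi Y z] Y unfolding mult_mat_vec_def by auto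
  have psij: "\<psi> $ j = (\<Sum>r\<in>{0..<n}. \<phi> $ r * Y $$ (r,j))" if "j < n" for j
    unfolding \<psi>_def scalar_prod_def using that phi Y by auto
  have "\<psi> \<bullet> z0 \<noteq> 0" using psi[OF z0] nz by simp
  then obtain i where i: "i < n" and pi0: "\<psi> $ i * z0 $ i \<noteq> 0"
    unfolding scalar_prod_def using z0 by (metis (no_types, lifting) atLeastLessThan_iff carrier_vecD sum.neutral)
  then have pi: "\<psi> $ i \<noteq> 0" by auto
  have iJ: "i \<in> J"
  proof (rule ccontr)
    assume "i \<notin> J"
    then have "\<psi> $ i = 0" using psij[OF i] YJ i by simp
    with pi show False by simp
  qed
  define Y' where "Y' = mat n n (\<lambda>(r,s). Y $$ (r,s) - Y $$ (r,i) * \<psi> $ s / \<psi> $ i)"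
  have Y': "Y' \<in> carrier_mat n n" unfolding Y'_def by simp
  have zero: "\<forall>r<n. \<forall>j<n. j \<notin> J - {i} \<longrightarrow> Y' $$ (r,j) = 0"
  proof (intro allI impI)
    fix r j assume r: "r < n" and j: "j < n" and nj: "j \<notin> J - {i}"
    show "Y' $$ (r,j) = 0"
    proof (cases "j = i")
      case True
      then show ?thesis unfolding Y'_def using r j pi by simp
    next
      case False
      then have "j \<notin> J" using nj by simp
      then have "\<psi> $ j = 0" "Y $$ (r,j) = 0" using psij[OF j] YJ j r by auto
      then show ?thesis unfolding Y'_def using r j by simp
    qed
  qed
  have eq: "Y' *\<^sub>v z = Y *\<^sub>v z" if z: "z \<in> carrier_vec n" and pz: "\<phi> \<bullet> (Y *\<^sub>v z) = 0" for z
  proof (rule eq_vecI)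
    have pz': "(\<Sum>s\<in>{0..<n}. \<psi> $ s * z $ s) = 0" using psi[OF z] pz z unfolding scalar_prod_def by simp
    fix r assume "r < dim_vec (Y *\<^sub>v z)"
    then have r: "r < n" using Y by simp
    have "(Y' *\<^sub>v z) $ r = (\<Sum>s\<in>{0..<n}. (Y $$ (r,s) - Y $$ (r,i) * \<psi> $ s / \<psi> $ i) * z $ s)"
      unfolding Y'_def using r z by (simp add: scalar_prod_def)
    also have "\<dots> = (\<Sum>s\<in>{0..<n}. Y $$ (r,s) * z $ s) - Y $$ (r,i) / \<psi> $ i * (\<Sum>s\<in>{0..<n}. \<psi> $ s * z $ s)"
      by (simp add: algebra_simps sum_subtractf sum_distrib_left)
    also have "\<dots> = (Y *\<^sub>v z) $ r" using r z Y pz' by (simp add: scalar_prod_def)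
    finally show "(Y' *\<^sub>v z) $ r = (Y *\<^sub>v z) $ r" .
  qed (use Y Y' in auto)
  show ?thesis using iJ Y' zero eq by blast
qed

definition swap_col :: "nat \<Rightarrow> nat \<Rightarrow> 'b mat \<Rightarrow> 'b mat \<Rightarrow> 'b mat" where
  "swap_col n j P Q = mat n n (\<lambda>(r,s). if s = j then Q $$ (r,s) else P $$ (r,s))"

lemma swap_col_carrier[simp]: "swap_col n j P Q \<in> carrier_mat n n" unfolding swap_col_def by simp
lemma swap_col_dim[simp]: "dim_row (swap_col n j P Q) = n" "dim_col (swap_col n j P Q) = n" unfolding swap_col_def by simp_all
lemma swap_col_index[simp]: "r < n \<Longrightarrow> s < n \<Longrightarrow> swap_col n j P Q $$ (r,s) = (if s = j then Q $$ (r,s) else P $$ (r,s))"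
  unfolding swap_col_def by simp

lemma swap_col_mult_transpose:
  fixes P :: "'b::comm_ring_1 mat"
  assumes "P \<in> carrier_mat n n" "Q \<in> carrier_mat n n" "R \<in> carrier_mat n n" "S \<in> carrier_mat n n"
  shows "swap_col n j P Q * transpose_mat (swap_col n j R S) + swap_col n j Q P * transpose_mat (swap_col n j S R)
    = P * transpose_mat R + Q * transpose_mat S"
  using assms by (intro eq_matI) (auto simp: scalar_prod_def sum.distrib[symmetric] intro!: sum.cong)

lemma four_block_swap_col:
  fixes a :: "'b::comm_ring_1 mat"
  assumes ab: "a \<in> carrier_mat n n" "b \<in> carrier_mat n n" "c \<in> carrier_mat n n" "d \<in> carrier_mat n n"
    and j: "j < n"
  shows "four_block_mat (swap_col n j a b) (swap_col n j b a) (swap_col n j c d) (swap_col n j d c)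
    = transpose_mat (swaprows j (n+j) (transpose_mat (four_block_mat a b c d)))"
proof (rule eq_matI)
  have dims: "dim_row a = n" "dim_col a = n" "dim_row b = n" "dim_col b = n"
     "dim_row c = n" "dim_col c = n" "dim_row d = n" "dim_col d = n" using ab by auto
  fix u v assume "u < dim_row (transpose_mat (swaprows j (n+j) (transpose_mat (four_block_mat a b c d))))"
    "v < dim_col (transpose_mat (swaprows j (n+j) (transpose_mat (four_block_mat a b c d))))"
  then have u: "u < n + n" and v: "v < n + n" using dims by (auto simp: mat_swaprows_def)
  show "four_block_mat (swap_col n j a b) (swap_col n j b a) (swap_col n j c d) (swap_col n j d c) $$ (u,v) =
    transpose_mat (swaprows j (n+j) (transpose_mat (four_block_mat a b c d))) $$ (u,v)"
    using u v j dims by (auto simp: mat_swaprows_def)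
qed (use ab in \<open>auto simp: mat_swaprows_def\<close>)


lemma det_four_block_swap_col:
  fixes a :: "'b::comm_ring_1 mat"
  assumes abcd: "a \<in> carrier_mat n n" "b \<in> carrier_mat n n" "c \<in> carrier_mat n n" "d \<in> carrier_mat n n"
    and j: "j < n"
  shows "det (four_block_mat (swap_col n j a b) (swap_col n j b a) (swap_col n j c d) (swap_col n j d c))
    = - det (four_block_mat a b c d)"
proof -
  let ?M = "four_block_mat a b c d"
  have M: "?M \<in> carrier_mat (n + n) (n + n)" using abcd by simp
  have "det (transpose_mat (swaprows j (n + j) (transpose_mat ?M))) = det (swaprows j (n + j) (transpose_mat ?M))"
    by (rule det_transpose[of _ "n + n"]) (use abcd in \<open>simp add: mat_swaprows_def\<close>)
  also have "\<dots> = - det (transpose_mat ?M)"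
    by (rule det_swaprows[of j "n + n" "n + j"]) (use j M in auto)
  also have "\<dots> = - det ?M" by (simp add: det_transpose[OF M])
  finally show ?thesis unfolding four_block_swap_col[OF abcd j] .
qed

locale hermitian_blocks = square_blocks n for n +
  fixes \<sigma> :: "'a::field \<Rightarrow> 'a"
  assumes bar_add: "\<sigma> (x + y) = \<sigma> x + \<sigma> y" and bar_mult: "\<sigma> (x * y) = \<sigma> x * \<sigma> y"
    and bar_one: "\<sigma> 1 = 1" and bar_bar: "\<sigma> (\<sigma> x) = x"
begin

lemma bar_zero[simp]: "\<sigma> 0 = 0"
  using bar_add[of 0 0] by (metis add_cancel_right_right add_0)
lemma bar_uminus: "\<sigma> (- x) = - \<sigma> x"
proof -
  have "\<sigma> x + \<sigma> (-x) = 0" using bar_add[of x "-x"] by simp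
  from minus_unique[OF this] show ?thesis by simp
qed
lemma bar_diff: "\<sigma> (x - y) = \<sigma> x - \<sigma> y"
  by (metis diff_conv_add_uminus bar_add bar_uminus)
lemma bar_sum: "\<sigma> (sum f A) = sum (\<lambda>x. \<sigma> (f x)) A"
  by (induct A rule: infinite_finite_induct) (auto simp: bar_add)
lemma bar_eq_0_iff[simp]: "\<sigma> x = 0 \<longleftrightarrow> x = 0"
  by (metis bar_bar bar_zero)

abbreviation ct :: "'a mat \<Rightarrow> 'a mat" where "ct A \<equiv> ctr \<sigma> A"

lemma ct_carrier[simp]: "A \<in> carrier_mat r c \<Longrightarrow> ct A \<in> carrier_mat c r"
  unfolding ctr_def by auto
lemma ct_dim[simp]: "dim_row (ct A) = dim_col A" "dim_col (ct A) = dim_row A"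
  unfolding ctr_def by auto
lemma ct_index[simp]: "i < dim_col A \<Longrightarrow> j < dim_row A \<Longrightarrow> ct A $$ (i,j) = \<sigma> (A $$ (j,i))"
  unfolding ctr_def by auto

lemma ct_mult:
  assumes "A \<in> carrier_mat r m" "B \<in> carrier_mat m c"
  shows "ct (A * B) = ct B * ct A"
proof (rule eq_matI)
  fix i j assume ij: "i < dim_row (ct B * ct A)" "j < dim_col (ct B * ct A)"
  then have i: "i < c" and j: "j < r" using assms by auto
  show "ct (A * B) $$ (i, j) = (ct B * ct A) $$ (i, j)"
    using assms i j by (auto simp: scalar_prod_def bar_sum bar_mult mult.commute intro!: sum.cong)
qed (insert assms, auto)

lemma ct_add:
  assumes "A \<in> carrier_mat r c" "B \<in> carrier_mat r c"
  shows "ct (A + B) = ct A + ct B"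
  by (rule eq_matI, insert assms, auto simp: bar_add)
lemma ct_uminus:
  assumes "A \<in> carrier_mat r c"
  shows "ct (- A) = - ct A"
  by (rule eq_matI, insert assms, auto simp: bar_uminus)
lemma ct_diff:
  assumes "A \<in> carrier_mat r c" "B \<in> carrier_mat r c"
  shows "ct (A - B) = ct A - ct B"
  by (rule eq_matI, insert assms, auto simp: bar_diff)
lemma ct_ct[simp]: "ct (ct A) = A"
  by (rule eq_matI, auto simp: bar_bar)
lemma ct_one[simp]: "ct (1\<^sub>m k) = 1\<^sub>m k"
  by (rule eq_matI, auto simp: bar_one)
lemma ct_zero[simp]: "ct (0\<^sub>m k l) = 0\<^sub>m l k"
  by (rule eq_matI, auto)

lemma ct_four_block_mat:
  assumes "A \<in> carrier_mat n1 m1" "B \<in> carrier_mat n1 m2"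
    "D \<in> carrier_mat n2 m1" "E \<in> carrier_mat n2 m2"
  shows "ct (four_block_mat A B D E) = four_block_mat (ct A) (ct D) (ct B) (ct E)"
  unfolding ctr_def using assms
  by (simp add: map_four_block_mat[OF assms] transpose_four_block_mat)

lemma ct_mult_sq: "sq A \<Longrightarrow> sq B \<Longrightarrow> ct (A * B) = ct B * ct A" by (rule ct_mult)
lemma ct_add_sq: "sq A \<Longrightarrow> sq B \<Longrightarrow> ct (A + B) = ct A + ct B" by (rule ct_add)
lemma ct_diff_sq: "sq A \<Longrightarrow> sq B \<Longrightarrow> ct (A - B) = ct A - ct B" by (rule ct_diff)
lemma ct_uminus_sq: "sq A \<Longrightarrow> ct (- A) = - ct A" by (rule ct_uminus)
lemmas ct_sq_simps = ct_mult_sq ct_add_sq ct_diff_sq ct_uminus_sq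
lemma sq_ct[simp]: "sq A \<Longrightarrow> sq (ct A)" by simp

definition Jform :: "'a mat" where "Jform = four_block_mat (0\<^sub>m n n) (1\<^sub>m n) (1\<^sub>m n) (0\<^sub>m n n)"

lemma Jform_carrier[simp]: "Jform \<in> carrier_mat (n + n) (n + n)"
  unfolding Jform_def by simp

lemma four_block_mult_Jform_mult:
  assumes "sq a" "sq b" "sq c" "sq d" "sq e" "sq f" "sq g" "sq h"
  shows "four_block_mat a b c d * Jform * four_block_mat e f g h
   = four_block_mat (b*e + a*g) (b*f + a*h) (d*e + c*g) (d*f + c*h)"
proof -
  have "four_block_mat a b c d * Jform = four_block_mat (a * 0\<^sub>m n n + b * 1\<^sub>m n) (a * 1\<^sub>m n + b * 0\<^sub>m n n)
    (c * 0\<^sub>m n n + d * 1\<^sub>m n) (c * 1\<^sub>m n + d * 0\<^sub>m n n)"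
    unfolding Jform_def by (rule mult_four_block_sq) (use assms in auto)
  also have "\<dots> = four_block_mat b a d c" using assms by (simp add: mat_ring_simps)
  finally show ?thesis using assms by (simp add: mult_four_block_sq)
qed

lemma Jform_square: "Jform * Jform = 1\<^sub>m (n + n)"
  unfolding Jform_def by (simp add: mult_four_block_sq mat_ring_simps)

interpretation double: square_blocks "n + n" .

lemma four_block_preserves_form_iff:
  assumes "sq a" "sq b" "sq c" "sq d"
  shows "four_block_mat a b c d * Jform * ct (four_block_mat a b c d) = Jform \<longleftrightarrow>
    a * ct d + b * ct c = 1\<^sub>m n \<and> a * ct b + b * ct a = 0\<^sub>m n n \<and> c * ct d + d * ct c = 0\<^sub>m n n"
proof -
  have e: "four_block_mat a b c d * Jform * ct (four_block_mat a b c d) =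
    four_block_mat (b * ct a + a * ct b) (b * ct c + a * ct d) (d * ct a + c * ct b) (d * ct c + c * ct d)"
    unfolding ct_four_block_mat[OF assms] by (rule four_block_mult_Jform_mult) (use assms in auto)
  have t: "d * ct a + c * ct b = ct (a * ct d + b * ct c)"
    using assms by (simp add: ct_sq_simps mat_ring_simps)
  show ?thesis
  proof
    assume "four_block_mat a b c d * Jform * ct (four_block_mat a b c d) = Jform"
    then have "four_block_mat (b * ct a + a * ct b) (b * ct c + a * ct d) (d * ct a + c * ct b) (d * ct c + c * ct d)
       = Jform" unfolding e .
    then have "four_block_mat (b * ct a + a * ct b) (b * ct c + a * ct d) (d * ct a + c * ct b) (d * ct c + c * ct d)
       = four_block_mat (0\<^sub>m n n) (1\<^sub>m n) (1\<^sub>m n) (0\<^sub>m n n)" unfolding Jform_def .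
    from four_block_mat_inj[OF _ _ _ _ _ _ _ _ this] assms
    show "a * ct d + b * ct c = 1\<^sub>m n \<and> a * ct b + b * ct a = 0\<^sub>m n n \<and> c * ct d + d * ct c = 0\<^sub>m n n"
      by (simp add: mat_ring_simps)
  next
    assume r: "a * ct d + b * ct c = 1\<^sub>m n \<and> a * ct b + b * ct a = 0\<^sub>m n n \<and> c * ct d + d * ct c = 0\<^sub>m n n"
    have "b * ct a + a * ct b = 0\<^sub>m n n" "b * ct c + a * ct d = 1\<^sub>m n" "d * ct c + c * ct d = 0\<^sub>m n n"
      "d * ct a + c * ct b = 1\<^sub>m n"
      using r assms unfolding t by (simp_all add: mat_ring_simps)
    then show "four_block_mat a b c d * Jform * ct (four_block_mat a b c d) = Jform"
      by (subst e) (simp add: Jform_def)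
  qed
qed

text \<open>If M J M^* = J then J M^* J is the inverse of M, hence also M^* J M = J.\<close>
lemma preserves_form_dual:
  assumes abcd: "sq a" "sq b" "sq c" "sq d"
    and J: "four_block_mat a b c d * Jform * ct (four_block_mat a b c d) = Jform"
  shows "ct a * c + ct c * a = 0\<^sub>m n n" "ct a * d + ct c * b = 1\<^sub>m n" "ct d * a + ct b * c = 1\<^sub>m n"
proof -
  define M where "M = four_block_mat a b c d"
  have M: "M \<in> carrier_mat (n + n) (n + n)" unfolding M_def using abcd by auto
  have "M * (Jform * ct M * Jform) = 1\<^sub>m (n + n)"
    using J Jform_square M unfolding M_def[symmetric] by (simp add: double.m_assoc[symmetric])
  then have "(Jform * ct M * Jform) * M = 1\<^sub>m (n + n)"
    using mat_mult_left_right_inverse[OF M] M by auto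
  then have "Jform * ((Jform * ct M * Jform) * M) = Jform"
    using right_mult_one_mat[OF Jform_carrier] by simp
  then have "ct M * Jform * M = Jform"
    using M by (simp add: double.m_assoc Jform_square flip: double.m_assoc[of Jform Jform])
  then have "four_block_mat (ct c * a + ct a * c) (ct c * b + ct a * d) (ct d * a + ct b * c) (ct d * b + ct b * d)
    = four_block_mat (0\<^sub>m n n) (1\<^sub>m n) (1\<^sub>m n) (0\<^sub>m n n)"
    unfolding M_def ct_four_block_mat[OF abcd] Jform_def[symmetric]
    by (subst (asm) four_block_mult_Jform_mult) (use abcd in auto)
  from four_block_mat_inj[OF _ _ _ _ _ _ _ _ this] abcd
  show "ct a * c + ct c * a = 0\<^sub>m n n" "ct a * d + ct c * b = 1\<^sub>m n" "ct d * a + ct b * c = 1\<^sub>m n"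
    by (simp_all add: mat_ring_simps)
qed

lemma grpG_iff:
  "M \<in> grpG \<sigma> n \<longleftrightarrow> M \<in> carrier_mat (n + n) (n + n) \<and> det M = 1 \<and> M * Jform * ct M = Jform"
proof
  assume "M \<in> grpG \<sigma> n"
  then show "M \<in> carrier_mat (n + n) (n + n) \<and> det M = 1 \<and> M * Jform * ct M = Jform"
    unfolding grpG_def using four_block_preserves_form_iff by fastforce
next
  assume M: "M \<in> carrier_mat (n + n) (n + n) \<and> det M = 1 \<and> M * Jform * ct M = Jform"
  obtain a b c d where "split_block M n n = (a, b, c, d)" by (metis prod_cases4)
  from split_block[OF this] M have "sq a" "sq b" "sq c" "sq d" "M = four_block_mat a b c d"
    by auto
  then show "M \<in> grpG \<sigma> n"
    unfolding grpG_def using four_block_preserves_form_iff M by blast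
qed

lemma grpG_mult:
  assumes "M1 \<in> grpG \<sigma> n" "M2 \<in> grpG \<sigma> n" shows "M1 * M2 \<in> grpG \<sigma> n"
proof -
  have M: "M1 \<in> carrier_mat (n + n) (n + n)" "M2 \<in> carrier_mat (n + n) (n + n)"
    and J: "M1 * Jform * ct M1 = Jform" "M2 * Jform * ct M2 = Jform"
    using assms grpG_iff by auto
  have "(M1 * M2) * Jform * ct (M1 * M2) = M1 * (M2 * Jform * ct M2) * ct M1"
    unfolding ct_mult[OF M] using M by (simp add: double.m_assoc)
  then show ?thesis using assms M J grpG_iff by (simp add: det_mult)
qed

lemma four_block_in_grpG:
  assumes "sq a" "sq b" "sq c" "sq d" "det (four_block_mat a b c d) = 1"
    "a * ct d + b * ct c = 1\<^sub>m n" "a * ct b + b * ct a = 0\<^sub>m n n" "c * ct d + d * ct c = 0\<^sub>m n n"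
  shows "four_block_mat a b c d \<in> grpG \<sigma> n"
  unfolding grpG_def using assms by blast

lemma det_V_block: "sq k \<Longrightarrow> det (V_block k) = 1"
  by (subst det_four_block_mat_lower_left_zero[of _ n _ n]) auto

lemma det_VT_block: "sq k \<Longrightarrow> det (VT_block k) = 1"
  by (subst det_four_block_mat_upper_right_zero[of _ n _ n]) auto

lemma det_diag_block: "sq x \<Longrightarrow> sq y \<Longrightarrow> det (diag_block x y) = det x * det y"
  by (subst det_four_block_mat_upper_right_zero[of _ n _ n]) auto

lemma V_block_in_grpG: "sq k \<Longrightarrow> ct k = - k \<Longrightarrow> V_block k \<in> grpG \<sigma> n"
  by (rule four_block_in_grpG) (simp_all add: det_V_block mat_ring_simps)

lemma VT_block_in_grpG: "sq k \<Longrightarrow> ct k = - k \<Longrightarrow> VT_block k \<in> grpG \<sigma> n"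
  by (rule four_block_in_grpG) (simp_all add: det_VT_block mat_ring_simps)

lemma V_block_mult:
  "sq a \<Longrightarrow> sq b \<Longrightarrow> sq c \<Longrightarrow> sq d \<Longrightarrow> sq k \<Longrightarrow>
    V_block k * four_block_mat a b c d = four_block_mat (a + k * c) (b + k * d) c d"
  by (simp add: mult_four_block_sq mat_ring_simps)

lemma V_shift_in_grpG:
  assumes abcd: "sq a" "sq b" "sq c" "sq d" and k: "sq k" "ct k = - k"
    and G: "four_block_mat a b c d \<in> grpG \<sigma> n"
  shows "four_block_mat (a - k * c) (b - k * d) c d \<in> grpG \<sigma> n"
proof -
  have "V_block (- k) \<in> grpG \<sigma> n" using k by (intro V_block_in_grpG) (simp_all add: ct_uminus_sq)
  from grpG_mult[OF this G] show ?thesis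
    using abcd k by (simp add: V_block_mult mat_ring_simps)
qed

lemma grpG_block_relations:
  assumes abcd: "sq a" "sq b" "sq c" "sq d" and G: "four_block_mat a b c d \<in> grpG \<sigma> n"
  shows "four_block_mat a b c d * Jform * ct (four_block_mat a b c d) = Jform"
    "a * ct d + b * ct c = 1\<^sub>m n" "a * ct b + b * ct a = 0\<^sub>m n n" "c * ct d + d * ct c = 0\<^sub>m n n"
    "d * ct a + c * ct b = 1\<^sub>m n"
    "ct a * c + ct c * a = 0\<^sub>m n n" "ct a * d + ct c * b = 1\<^sub>m n" "ct d * a + ct b * c = 1\<^sub>m n"
    "det (four_block_mat a b c d) = 1"
proof -
  show J: "four_block_mat a b c d * Jform * ct (four_block_mat a b c d) = Jform"
    "det (four_block_mat a b c d) = 1"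
    using G grpG_iff by auto
  then show r: "a * ct d + b * ct c = 1\<^sub>m n" "a * ct b + b * ct a = 0\<^sub>m n n" "c * ct d + d * ct c = 0\<^sub>m n n"
    using four_block_preserves_form_iff[OF abcd] by auto
  show "ct a * c + ct c * a = 0\<^sub>m n n" "ct a * d + ct c * b = 1\<^sub>m n" "ct d * a + ct b * c = 1\<^sub>m n"
    using preserves_form_dual[OF abcd J(1)] by auto
  have "d * ct a + c * ct b = ct (a * ct d + b * ct c)"
    using abcd by (simp add: ct_sq_simps mat_ring_simps)
  then show "d * ct a + c * ct b = 1\<^sub>m n" using r by simp
qed

lemma ct_a_c_ker_a:
  assumes abcd: "sq a" "sq b" "sq c" "sq d" and G: "four_block_mat a b c d \<in> grpG \<sigma> n"
    and y: "y \<in> carrier_vec n" and ay: "a *\<^sub>v y = 0\<^sub>v n"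
  shows "ct a *\<^sub>v (c *\<^sub>v y) = 0\<^sub>v n"
proof -
  have r: "ct a * c = - (ct c * a)"
    using grpG_block_relations(6)[OF abcd G] abcd by (intro eq_minus_if_add_eq_0) auto
  have "ct a *\<^sub>v (c *\<^sub>v y) = (ct a * c) *\<^sub>v y"
    using abcd y by (simp add: assoc_mult_mat_vec[of _ n n _ n])
  also have "\<dots> = - (ct c *\<^sub>v (a *\<^sub>v y))"
    unfolding r using abcd y by (simp add: assoc_mult_mat_vec[of _ n n _ n])
  finally show ?thesis using abcd ay by simp
qed

lemma ker_a_inter_ker_c_trivial:
  assumes abcd: "sq a" "sq b" "sq c" "sq d" and G: "four_block_mat a b c d \<in> grpG \<sigma> n"
    and y: "y \<in> carrier_vec n" and ay: "a *\<^sub>v y = 0\<^sub>v n" and cy: "c *\<^sub>v y = 0\<^sub>v n"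
  shows "y = 0\<^sub>v n"
proof -
  have "y = (ct d * a + ct b * c) *\<^sub>v y" using grpG_block_relations(8)[OF abcd G] y by simp
  also have "\<dots> = ct d *\<^sub>v (a *\<^sub>v y) + ct b *\<^sub>v (c *\<^sub>v y)" using abcd y
    by (simp add: add_mult_distrib_mat_vec[of _ n n] assoc_mult_mat_vec[of _ n n _ n])
  also have "\<dots> = 0\<^sub>v n" unfolding ay cy using abcd by simp
  finally show ?thesis .
qed

definition sesq :: "'a vec \<Rightarrow> 'a vec \<Rightarrow> 'a" where "sesq u v = map_vec \<sigma> u \<bullet> v"

lemma sesq_sum:
  "u \<in> carrier_vec n \<Longrightarrow> v \<in> carrier_vec n \<Longrightarrow> sesq u v = (\<Sum>r\<in>{0..<n}. \<sigma> (u $ r) * v $ r)"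
  unfolding sesq_def scalar_prod_def by auto

lemma sesq_adjoint:
  assumes M: "sq M" and u: "u \<in> carrier_vec n" and v: "v \<in> carrier_vec n"
  shows "sesq u (M *\<^sub>v v) = sesq (ct M *\<^sub>v u) v"
proof -
  have "map_vec \<sigma> (ct M *\<^sub>v u) = vec n (\<lambda>j. map_vec \<sigma> u \<bullet> col M j)"
    using M u by (auto simp: scalar_prod_def bar_sum bar_mult bar_bar mult.commute intro!: sum.cong)
  then show ?thesis unfolding sesq_def mult_mat_vec_def[of M v]
    using assoc_scalar_prod[of "map_vec \<sigma> u" n M n v] M u v by auto
qed

lemma sesq_c_ker_a_range_a:
  assumes abcd: "sq a" "sq b" "sq c" "sq d" and G: "four_block_mat a b c d \<in> grpG \<sigma> n"
    and y: "y \<in> carrier_vec n" and ay: "a *\<^sub>v y = 0\<^sub>v n" and x: "x \<in> carrier_vec n"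
  shows "sesq (c *\<^sub>v y) (a *\<^sub>v x) = 0"
  using sesq_adjoint[of a "c *\<^sub>v y" x] ct_a_c_ker_a[OF abcd G y ay] abcd x y
  by (simp add: sesq_def scalar_prod_def)

lemma factor_VT_V_diag:
  assumes abcd: "sq a" "sq b" "sq c" "sq d"
    and J: "four_block_mat a b c d * Jform * ct (four_block_mat a b c d) = Jform"
    and xi: "sq xi" "a * xi = 1\<^sub>m n" "xi * a = 1\<^sub>m n"
  shows "ct (c * xi) = - (c * xi)" "ct (b * ct a) = - (b * ct a)"
    "four_block_mat a b c d = VT_block (c * xi) * V_block (b * ct a) * diag_block a (ct xi)"
proof -
  note [simp] = abcd xi(1)
  have r: "a * ct b + b * ct a = 0\<^sub>m n n"
    using four_block_preserves_form_iff[OF abcd] J by auto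
  note du = preserves_form_dual[OF abcd J]
  have "ct xi * ct a = ct (a * xi)" "ct a * ct xi = ct (xi * a)" by (simp_all add: ct_mult_sq)
  then have cxi: "ct xi * ct a = 1\<^sub>m n" "ct a * ct xi = 1\<^sub>m n" using xi by simp_all
  have cancel: "a * (xi * Z) = Z" "ct xi * (ct a * Z) = Z" if "sq Z" for Z
    using that xi cxi by (simp_all flip: m_assoc)
  have "ct (c * xi) + c * xi = ct xi * ct c * (a * xi) + ct xi * ct a * (c * xi)"
    unfolding xi(2) cxi(1) by (simp add: ct_mult_sq r_one l_one)
  also have "\<dots> = ct xi * (ct a * c + ct c * a) * xi" by (simp add: mat_ring_simps)
  also have "\<dots> = 0\<^sub>m n n" by (simp add: du(1) mat_ring_simps)
  finally show "ct (c * xi) = - (c * xi)" by (intro eq_minus_if_add_eq_0) auto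
  show "ct (b * ct a) = - (b * ct a)"
    using r by (simp add: ct_mult_sq eq_minus_if_add_eq_0)
  have ac: "ct a * c = - (ct c * a)" using du(1) by (intro eq_minus_if_add_eq_0) auto
  have "ct a * d = (ct a * d + ct c * b) + - (ct c * b)" by (simp add: mat_ring_simps)
  then have ad: "ct a * d = 1\<^sub>m n + - (ct c * b)" unfolding du(2) .
  have "ct a * (c * xi * b + ct xi) = ct a * c * xi * b + ct a * ct xi" by (simp add: mat_ring_simps)
  also have "\<dots> = ct a * d" unfolding ac cxi(2) ad by (simp add: mat_ring_simps cancel)
  finally have "ct xi * (ct a * (c * xi * b + ct xi)) = ct xi * (ct a * d)" by simp
  then have "c * xi * b + ct xi = d" by (simp only: cancel sq_add sq_mult sq_ct abcd xi(1))
  moreover have "V_block (b * ct a) * diag_block a (ct xi) = four_block_mat a b (0\<^sub>m n n) (ct xi)"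
    by (simp add: mult_four_block_sq mat_ring_simps cxi)
  moreover have "VT_block (c * xi) * four_block_mat a b (0\<^sub>m n n) (ct xi)
      = four_block_mat a b c (c * xi * b + ct xi)"
    by (simp add: mult_four_block_sq mat_ring_simps xi(3))
  ultimately have "VT_block (c * xi) * (V_block (b * ct a) * diag_block a (ct xi)) = four_block_mat a b c d"
    by simp
  then show "four_block_mat a b c d = VT_block (c * xi) * V_block (b * ct a) * diag_block a (ct xi)"
    by (simp add: double.m_assoc)
qed

lemma det_nonzero_imp_inverse:
  assumes "sq (a::'a mat)" "det a \<noteq> 0"
  obtains xi where "sq xi" "a * xi = 1\<^sub>m n" "xi * a = 1\<^sub>m n"
  using det_non_zero_imp_unit[OF assms, of "()"] that unfolding Units_def ring_mat_def by auto

lemma ct_id: "\<forall>x. \<sigma> x = x \<Longrightarrow> ct A = transpose_mat A"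
  by (rule eq_matI) auto

lemma det_eq_1_if_corner_invertible:
  assumes id: "\<forall>x. \<sigma> x = x" and abcd: "sq a" "sq b" "sq c" "sq d"
    and J: "four_block_mat a b c d * Jform * ct (four_block_mat a b c d) = Jform"
    and a: "det a \<noteq> 0"
  shows "det (four_block_mat a b c d) = 1"
proof -
  obtain xi where xi: "sq xi" "a * xi = 1\<^sub>m n" "xi * a = 1\<^sub>m n"
    using det_nonzero_imp_inverse[OF abcd(1) a] .
  have "det (four_block_mat a b c d) = det (VT_block (c * xi)) * det (V_block (b * ct a))
      * det (diag_block a (ct xi))"
    unfolding factor_VT_V_diag(3)[OF abcd J xi] using abcd xi
    by (simp add: det_mult[of _ "n + n"])
  also have "\<dots> = det a * det xi"
    using abcd xi by (simp add: det_V_block det_VT_block det_diag_block ct_id[OF id] det_transpose)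
  also have "\<dots> = 1" using det_mult[OF abcd(1) xi(1), symmetric] xi(2) by simp
  finally show ?thesis .
qed

text \<open>Certifies that replacing a by a - k c, i.e. multiplying on the left by V_block (-k),
  strictly shrinks the kernel of a.\<close>
definition shrinks_kernel :: "'a mat \<Rightarrow> 'a mat \<Rightarrow> 'a vec \<Rightarrow> 'a mat \<Rightarrow> 'a vec \<Rightarrow> bool" where
  "shrinks_kernel a c y k \<phi> \<longleftrightarrow> sq k \<and> ct k = - k \<and> \<phi> \<in> carrier_vec n \<and> \<phi> \<bullet> y \<noteq> 0 \<and>
     (\<forall>x\<in>carrier_vec n. (a - k * c) *\<^sub>v x = 0\<^sub>v n \<longrightarrow> a *\<^sub>v x = 0\<^sub>v n \<and> \<phi> \<bullet> x = 0)"

lemma mult_vec_on_kernel_of_diff: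
  assumes "sq (a::'a mat)" "sq c" "sq k" "x \<in> carrier_vec n" and e: "(a - k * c) *\<^sub>v x = 0\<^sub>v n"
  shows "a *\<^sub>v x = k *\<^sub>v (c *\<^sub>v x)"
proof -
  have "(a - k * c) *\<^sub>v x = a *\<^sub>v x - (k * c) *\<^sub>v x"
    using assms(1-4) by (simp add: minus_mult_distrib_mat_vec[of _ n n])
  also have "(k * c) *\<^sub>v x = k *\<^sub>v (c *\<^sub>v x)"
    using assms(1-4) by (simp add: assoc_mult_mat_vec[of _ n n _ n])
  finally have eq: "a *\<^sub>v x - k *\<^sub>v (c *\<^sub>v x) = 0\<^sub>v n" using e by simp
  show ?thesis
  proof (rule eq_vecI)
    fix r assume "r < dim_vec (k *\<^sub>v (c *\<^sub>v x))"
    then show "(a *\<^sub>v x) $ r = (k *\<^sub>v (c *\<^sub>v x)) $ r"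
      using arg_cong[OF eq, of "\<lambda>v. v $ r"] assms by simp
  qed (use assms in simp)
qed

definition Emat :: "nat \<Rightarrow> nat \<Rightarrow> 'a mat" where
  "Emat i l = mat n n (\<lambda>(r,s). if r = i \<and> s = l then 1 else 0)"

lemma Emat_carrier[simp]: "sq (Emat i l)"
  unfolding Emat_def by simp

lemma Emat_mult_vec:
  assumes "r < n" "l < n" "w \<in> carrier_vec n"
  shows "(Emat i l *\<^sub>v w) $ r = (if r = i then w $ l else 0)"
proof -
  have "(Emat i l *\<^sub>v w) $ r = (\<Sum>s\<in>{0..<n}. (if r = i \<and> s = l then 1 else 0) * w $ s)"
    unfolding Emat_def using assms by (simp add: scalar_prod_def)
  also have "\<dots> = (\<Sum>s\<in>{0..<n}. if s = l then (if r = i then w $ l else 0) else 0)"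
    by (rule sum.cong) auto
  finally show ?thesis using assms by simp
qed

lemma smult_mat_mult_vec_index:
  "sq A \<Longrightarrow> w \<in> carrier_vec n \<Longrightarrow> r < n \<Longrightarrow> (t \<cdot>\<^sub>m A *\<^sub>v w) $ r = t * (A *\<^sub>v w) $ r"
  by (simp add: scalar_prod_def sum_distrib_left mult.assoc)

lemma Emat_skew_mult_vec:
  assumes "r < n" "i < n" "l < n" "w \<in> carrier_vec n"
  shows "((Emat i l - Emat l i) *\<^sub>v w) $ r = (if r = i then w $ l else 0) - (if r = l then w $ i else 0)"
  using assms Emat_mult_vec[of r l w i] Emat_mult_vec[of r i w l]
  by (simp add: minus_mult_distrib_mat_vec[of _ n n] carrier_matD[OF Emat_carrier])

lemma shrinks_kernel_scalar:
  assumes abcd: "sq a" "sq b" "sq c" "sq d" and G: "four_block_mat a b c d \<in> grpG \<sigma> n"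
    and y: "y \<in> carrier_vec n" "y \<noteq> 0\<^sub>v n" "a *\<^sub>v y = 0\<^sub>v n"
    and t: "t \<noteq> 0" "\<sigma> t = - t"
  shows "\<exists>k \<phi>. shrinks_kernel a c y k \<phi>"
proof -
  define p where "p = c *\<^sub>v y"
  have p: "p \<in> carrier_vec n" unfolding p_def using abcd y by simp
  have "p \<noteq> 0\<^sub>v n" unfolding p_def using ker_a_inter_ker_c_trivial[OF abcd G y(1,3)] y(2) by auto
  then obtain i where i: "i < n" and pi: "p $ i \<noteq> 0" using nonzero_vec_component[OF p] by auto
  define k where "k = t \<cdot>\<^sub>m Emat i i"
  have k: "sq k" "ct k = - k" unfolding k_def Emat_def by (auto intro!: eq_matI simp: t(2))
  have ker: "a *\<^sub>v x = 0\<^sub>v n \<and> row c i \<bullet> x = 0"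
    if x: "x \<in> carrier_vec n" and e: "(a - k * c) *\<^sub>v x = 0\<^sub>v n" for x
  proof -
    define w where "w = c *\<^sub>v x"
    have w: "w \<in> carrier_vec n" unfolding w_def using abcd x by simp
    have ax: "(a *\<^sub>v x) $ r = (if r = i then t * w $ i else 0)" if r: "r < n" for r
      using mult_vec_on_kernel_of_diff[OF abcd(1,3) k(1) x e] Emat_mult_vec[OF r i w] r w
      unfolding k_def w_def[symmetric] by (simp add: smult_mat_mult_vec_index)
    have "0 = sesq p (a *\<^sub>v x)" unfolding p_def using sesq_c_ker_a_range_a[OF abcd G y(1,3) x] by simp
    also have "\<dots> = (\<Sum>r\<in>{0..<n}. \<sigma> (p $ r) * (a *\<^sub>v x) $ r)"
      using sesq_sum p abcd x by simp
    also have "\<dots> = (\<Sum>r\<in>{0..<n}. if r = i then \<sigma> (p $ i) * (t * w $ i) else 0)"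
      by (rule sum.cong) (auto simp: ax)
    also have "\<dots> = \<sigma> (p $ i) * (t * w $ i)" using i by simp
    finally have "w $ i = 0" using pi t i by simp
    then show ?thesis using ax abcd i unfolding w_def by (auto intro!: eq_vecI)
  qed
  have "shrinks_kernel a c y k (row c i)"
    unfolding shrinks_kernel_def using k ker i abcd pi by (simp add: p_def)
  then show ?thesis by blast
qed

lemma shrinks_kernel_elementary:
  assumes id: "\<forall>x. \<sigma> x = x"
    and abcd: "sq a" "sq b" "sq c" "sq d" and G: "four_block_mat a b c d \<in> grpG \<sigma> n"
    and y1: "y1 \<in> carrier_vec n" "a *\<^sub>v y1 = 0\<^sub>v n" and y2: "y2 \<in> carrier_vec n" "a *\<^sub>v y2 = 0\<^sub>v n"
    and il: "i < n" "l < n" and pi: "(c *\<^sub>v y1) $ i \<noteq> 0"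
    and minor: "(c *\<^sub>v y1) $ i * (c *\<^sub>v y2) $ l - (c *\<^sub>v y2) $ i * (c *\<^sub>v y1) $ l \<noteq> 0"
  shows "\<exists>k \<phi>. shrinks_kernel a c y1 k \<phi>"
proof -
  define p where "p = c *\<^sub>v y1"
  define q where "q = c *\<^sub>v y2"
  have "i \<noteq> l" using minor by (auto simp: mult.commute)
  define k where "k = Emat i l - Emat l i"
  have k: "sq k" "ct k = - k"
    unfolding k_def ct_id[OF id] Emat_def using \<open>i \<noteq> l\<close> by (auto intro!: eq_matI)
  have ker: "a *\<^sub>v x = 0\<^sub>v n \<and> row c i \<bullet> x = 0"
    if x: "x \<in> carrier_vec n" and e: "(a - k * c) *\<^sub>v x = 0\<^sub>v n" for x
  proof -
    define w where "w = c *\<^sub>v x"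
    have w: "w \<in> carrier_vec n" unfolding w_def using abcd x by simp
    have ax: "(a *\<^sub>v x) $ r = (if r = i then w $ l else 0) - (if r = l then w $ i else 0)"
      if r: "r < n" for r
      using mult_vec_on_kernel_of_diff[OF abcd(1,3) k(1) x e] Emat_skew_mult_vec[OF r il w]
      unfolding k_def w_def[symmetric] by simp
    have orth: "v $ i * w $ l - v $ l * w $ i = 0"
      if "v = c *\<^sub>v z" "z \<in> carrier_vec n" "a *\<^sub>v z = 0\<^sub>v n" for v z
    proof -
      have "0 = sesq v (a *\<^sub>v x)" using sesq_c_ker_a_range_a[OF abcd G that(2,3) x] that(1) by simp
      also have "\<dots> = (\<Sum>r\<in>{0..<n}. v $ r * (a *\<^sub>v x) $ r)"
        using sesq_sum abcd x that id by simp
      also have "\<dots> = (\<Sum>r\<in>{0..<n}. (if r = i then v $ i * w $ l else 0) - (if r = l then v $ l * w $ i else 0))"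
        by (rule sum.cong) (auto simp: ax algebra_simps)
      also have "\<dots> = v $ i * w $ l - v $ l * w $ i" using il by (simp add: sum_subtractf)
      finally show ?thesis by simp
    qed
    have p: "p $ i * w $ l - p $ l * w $ i = 0" and q: "q $ i * w $ l - q $ l * w $ i = 0"
      using orth[OF p_def y1] orth[OF q_def y2] by auto
    have "(p $ i * q $ l - q $ i * p $ l) * w $ i = q $ i * (p $ i * w $ l - p $ l * w $ i) - p $ i * (q $ i * w $ l - q $ l * w $ i)"
      by (simp add: algebra_simps)
    then have "w $ i = 0" using p q minor unfolding p_def q_def by simp
    moreover from this have "w $ l = 0" using p pi unfolding p_def by simp
    ultimately show ?thesis using ax abcd il unfolding w_def by (auto intro!: eq_vecI)
  qed
  have "shrinks_kernel a c y1 k (row c i)"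
    unfolding shrinks_kernel_def using k ker il abcd pi by simp
  then show ?thesis by blast
qed

lemma ker_a_spanned_if_minors_vanish:
  assumes abcd: "sq a" "sq b" "sq c" "sq d" and G: "four_block_mat a b c d \<in> grpG \<sigma> n"
    and y: "y \<in> carrier_vec n" "a *\<^sub>v y = 0\<^sub>v n" and i: "i < n" "(c *\<^sub>v y) $ i \<noteq> 0"
    and minors: "\<And>y2 l. y2 \<in> carrier_vec n \<Longrightarrow> a *\<^sub>v y2 = 0\<^sub>v n \<Longrightarrow> l < n \<Longrightarrow>
      (c *\<^sub>v y) $ i * (c *\<^sub>v y2) $ l = (c *\<^sub>v y2) $ i * (c *\<^sub>v y) $ l"
    and x: "x \<in> carrier_vec n" "a *\<^sub>v x = 0\<^sub>v n"
  shows "\<exists>\<mu>. x = \<mu> \<cdot>\<^sub>v y"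
proof -
  define p where "p = c *\<^sub>v y"
  define q where "q = c *\<^sub>v x"
  have pq: "p \<in> carrier_vec n" "q \<in> carrier_vec n" unfolding p_def q_def using abcd x y by auto
  define v where "v = p $ i \<cdot>\<^sub>v x - q $ i \<cdot>\<^sub>v y"
  have v: "v \<in> carrier_vec n" unfolding v_def using x y by simp
  have "a *\<^sub>v v = p $ i \<cdot>\<^sub>v (a *\<^sub>v x) - q $ i \<cdot>\<^sub>v (a *\<^sub>v y)"
    unfolding v_def using abcd x y by (simp add: mult_minus_distrib_mat_vec[of _ n n] mult_mat_vec[of _ n n])
  then have av: "a *\<^sub>v v = 0\<^sub>v n" using x y by (auto intro!: eq_vecI)
  have "c *\<^sub>v v = p $ i \<cdot>\<^sub>v q - q $ i \<cdot>\<^sub>v p"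
    unfolding v_def p_def q_def using abcd x y by (simp add: mult_minus_distrib_mat_vec[of _ n n] mult_mat_vec[of _ n n])
  also have "\<dots> = 0\<^sub>v n" using pq minors[OF x] abcd unfolding p_def q_def by (intro eq_vecI) auto
  finally have "v = 0\<^sub>v n" by (rule ker_a_inter_ker_c_trivial[OF abcd G v av])
  have "x = (q $ i / p $ i) \<cdot>\<^sub>v y"
  proof (rule eq_vecI)
    fix r assume "r < dim_vec ((q $ i / p $ i) \<cdot>\<^sub>v y)"
    then have r: "r < n" using y by simp
    have "v $ r = 0" using \<open>v = 0\<^sub>v n\<close> r by simp
    then have "p $ i * x $ r = q $ i * y $ r" unfolding v_def using r x y by simp
    then show "x $ r = ((q $ i / p $ i) \<cdot>\<^sub>v y) $ r" using r y i unfolding p_def by (simp add: field_simps)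
  qed (use x y in simp)
  then show ?thesis by blast
qed

lemma ct_b_c_ker_a_if_corank_one:
  assumes abcd: "sq a" "sq b" "sq c" "sq d" and G: "four_block_mat a b c d \<in> grpG \<sigma> n"
    and y: "y \<in> carrier_vec n" "y \<noteq> 0\<^sub>v n" "a *\<^sub>v y = 0\<^sub>v n"
    and span: "\<And>x. x \<in> carrier_vec n \<Longrightarrow> a *\<^sub>v x = 0\<^sub>v n \<Longrightarrow> \<exists>\<mu>. x = \<mu> \<cdot>\<^sub>v y"
  shows "ct b *\<^sub>v (c *\<^sub>v y) = y"
proof -
  define p where "p = c *\<^sub>v y"
  define w where "w = ct b *\<^sub>v p"
  have p: "p \<in> carrier_vec n" "p \<noteq> 0\<^sub>v n"
    unfolding p_def using abcd y ker_a_inter_ker_c_trivial[OF abcd G y(1,3)] by auto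
  have w: "w \<in> carrier_vec n" unfolding w_def using abcd p by simp
  have ap: "ct a *\<^sub>v p = 0\<^sub>v n" unfolding p_def by (rule ct_a_c_ker_a[OF abcd G y(1,3)])
  have r: "a * ct b = - (b * ct a)"
    using grpG_block_relations(3)[OF abcd G] abcd by (intro eq_minus_if_add_eq_0) auto
  have "a *\<^sub>v w = (a * ct b) *\<^sub>v p"
    unfolding w_def using abcd p by (simp add: assoc_mult_mat_vec[of _ n n _ n])
  also have "\<dots> = - (b *\<^sub>v (ct a *\<^sub>v p))"
    unfolding r using abcd p by (simp add: assoc_mult_mat_vec[of _ n n _ n])
  finally have "a *\<^sub>v w = 0\<^sub>v n" unfolding ap using abcd by simp
  then obtain \<mu> where \<mu>: "w = \<mu> \<cdot>\<^sub>v y" using span[OF w] by auto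
  have "p = (d * ct a + c * ct b) *\<^sub>v p" using grpG_block_relations(5)[OF abcd G] p by simp
  also have "\<dots> = d *\<^sub>v (ct a *\<^sub>v p) + c *\<^sub>v w" unfolding w_def using abcd p
    by (simp add: add_mult_distrib_mat_vec[of _ n n] assoc_mult_mat_vec[of _ n n _ n])
  also have "\<dots> = \<mu> \<cdot>\<^sub>v p"
    unfolding \<mu> p_def using abcd y ct_a_c_ker_a[OF abcd G y(1,3)] by (simp add: mult_mat_vec[of _ n n])
  finally have "p = \<mu> \<cdot>\<^sub>v p" .
  moreover obtain i where "i < n" "p $ i \<noteq> 0" using nonzero_vec_component[OF p] by auto
  ultimately have "\<mu> = 1" by (metis index_smult_vec(1) p(1) carrier_vecD mult_cancel_right2)
  then show ?thesis using \<mu> unfolding w_def p_def by simp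
qed

lemma swap_col_preserves_form:
  assumes id: "\<forall>x. \<sigma> x = x" and abcd: "sq a" "sq b" "sq c" "sq d"
    and J: "four_block_mat a b c d * Jform * ct (four_block_mat a b c d) = Jform"
  shows "four_block_mat (swap_col n j a b) (swap_col n j b a) (swap_col n j c d) (swap_col n j d c) * Jform
    * ct (four_block_mat (swap_col n j a b) (swap_col n j b a) (swap_col n j c d) (swap_col n j d c)) = Jform"
  using J abcd
  unfolding four_block_preserves_form_iff[OF abcd]
    four_block_preserves_form_iff[OF swap_col_carrier swap_col_carrier swap_col_carrier swap_col_carrier]
  by (simp add: ct_id[OF id] swap_col_mult_transpose)

lemma det_swap_col_nonzero_if_corank_one:
  assumes id: "\<forall>x. \<sigma> x = x" and abcd: "sq a" "sq b" "sq c" "sq d"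
    and G: "four_block_mat a b c d \<in> grpG \<sigma> n"
    and y: "y \<in> carrier_vec n" "y \<noteq> 0\<^sub>v n" "a *\<^sub>v y = 0\<^sub>v n"
    and span: "\<And>x. x \<in> carrier_vec n \<Longrightarrow> a *\<^sub>v x = 0\<^sub>v n \<Longrightarrow> \<exists>\<mu>. x = \<mu> \<cdot>\<^sub>v y"
    and j: "j < n" "y $ j \<noteq> 0"
  shows "det (swap_col n j a b) \<noteq> 0"
proof
  define p where "p = c *\<^sub>v y"
  have p: "p \<in> carrier_vec n" unfolding p_def using abcd y by simp
  have ap: "transpose_mat a *\<^sub>v p = 0\<^sub>v n" and bp: "transpose_mat b *\<^sub>v p = y"
    using ct_a_c_ker_a[OF abcd G y(1,3)] ct_b_c_ker_a_if_corank_one[OF abcd G y span]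
    unfolding p_def ct_id[OF id] by auto
  assume "det (swap_col n j a b) = 0"
  then obtain x where x: "x \<in> carrier_vec n" "x \<noteq> 0\<^sub>v n" "swap_col n j a b *\<^sub>v x = 0\<^sub>v n"
    using det_0_iff_vec_prod_zero_field[OF swap_col_carrier[of n j a b]] by auto
  have col: "p \<bullet> col (swap_col n j a b) s = (if s = j then y $ j else 0)" if s: "s < n" for s
  proof -
    have "p \<bullet> col a s = (transpose_mat a *\<^sub>v p) $ s" "p \<bullet> col b s = (transpose_mat b *\<^sub>v p) $ s"
      using abcd s p by (simp_all add: comm_scalar_prod[of _ n])
    moreover have "col (swap_col n j a b) s = (if s = j then col b s else col a s)"
      using s abcd by (intro eq_vecI) auto
    ultimately show ?thesis unfolding ap bp using s by auto
  qed
  have "0 = p \<bullet> (swap_col n j a b *\<^sub>v x)" using x p by simp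
  also have "\<dots> = (\<Sum>s\<in>{0..<n}. p \<bullet> col (swap_col n j a b) s * x $ s)"
    using assoc_scalar_prod[OF p swap_col_carrier x(1)] x(1) unfolding mult_mat_vec_def
    by (simp add: scalar_prod_def)
  also have "\<dots> = (\<Sum>s\<in>{0..<n}. if s = j then y $ j * x $ j else 0)"
    by (rule sum.cong) (auto simp: col)
  finally have xj: "x $ j = 0" using j by simp
  have "a *\<^sub>v x = swap_col n j a b *\<^sub>v x"
    using abcd x(1) xj by (intro eq_vecI) (auto simp: scalar_prod_def intro!: sum.cong)
  then obtain \<nu> where "x = \<nu> \<cdot>\<^sub>v y" using span x by auto
  with xj j y x(2) show False by (auto intro!: eq_vecI)
qed

lemma corank_one_impossible:
  assumes id: "\<forall>x. \<sigma> x = x" and two: "(1::'a) + 1 \<noteq> 0"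
    and abcd: "sq a" "sq b" "sq c" "sq d" and G: "four_block_mat a b c d \<in> grpG \<sigma> n"
    and y: "y \<in> carrier_vec n" "y \<noteq> 0\<^sub>v n" "a *\<^sub>v y = 0\<^sub>v n"
    and span: "\<And>x. x \<in> carrier_vec n \<Longrightarrow> a *\<^sub>v x = 0\<^sub>v n \<Longrightarrow> \<exists>\<mu>. x = \<mu> \<cdot>\<^sub>v y"
  shows False
proof -
  obtain j where j: "j < n" "y $ j \<noteq> 0" using nonzero_vec_component[OF y(1,2)] by auto
  have "det (four_block_mat (swap_col n j a b) (swap_col n j b a) (swap_col n j c d) (swap_col n j d c)) = 1"
    by (rule det_eq_1_if_corner_invertible[OF id _ _ _ _ swap_col_preserves_form[OF id abcd]])
      (use grpG_block_relations(1)[OF abcd G] det_swap_col_nonzero_if_corank_one[OF id abcd G y span j] in auto)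
  moreover have "det (four_block_mat a b c d) = 1" using grpG_block_relations(9)[OF abcd G] .
  ultimately have "(1::'a) = - 1" using det_four_block_swap_col[OF abcd j(1)] by simp
  with two show False by (metis add.right_inverse)
qed

lemma bar_cases: "(\<exists>t. t \<noteq> 0 \<and> \<sigma> t = - t) \<or> ((\<forall>x. \<sigma> x = x) \<and> (1::'a) + 1 \<noteq> 0)"
proof (cases "\<forall>x. \<sigma> x = x")
  case False
  then obtain \<alpha> where "\<sigma> \<alpha> \<noteq> \<alpha>" by auto
  then have "\<alpha> - \<sigma> \<alpha> \<noteq> 0 \<and> \<sigma> (\<alpha> - \<sigma> \<alpha>) = - (\<alpha> - \<sigma> \<alpha>)" by (simp add: bar_diff bar_bar)
  then show ?thesis by blast
next
  case True
  then have "(1::'a) + 1 = 0 \<Longrightarrow> (1::'a) \<noteq> 0 \<and> \<sigma> 1 = - 1" by (simp add: eq_neg_iff_add_eq_0)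
  then show ?thesis using True by blast
qed

lemma shrinks_kernel_identity:
  assumes id: "\<forall>x. \<sigma> x = x" and two: "(1::'a) + 1 \<noteq> 0"
    and abcd: "sq a" "sq b" "sq c" "sq d" and G: "four_block_mat a b c d \<in> grpG \<sigma> n"
    and y: "y \<in> carrier_vec n" "y \<noteq> 0\<^sub>v n" "a *\<^sub>v y = 0\<^sub>v n"
  shows "\<exists>k \<phi>. shrinks_kernel a c y k \<phi>"
proof -
  have "c *\<^sub>v y \<noteq> 0\<^sub>v n" using ker_a_inter_ker_c_trivial[OF abcd G y(1,3)] y(2) by auto
  then obtain i where i: "i < n" "(c *\<^sub>v y) $ i \<noteq> 0"
    using nonzero_vec_component[of "c *\<^sub>v y"] abcd y by auto
  show ?thesis
  proof (cases "\<exists>y2 l. y2 \<in> carrier_vec n \<and> a *\<^sub>v y2 = 0\<^sub>v n \<and> l < n \<and>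
      (c *\<^sub>v y) $ i * (c *\<^sub>v y2) $ l - (c *\<^sub>v y2) $ i * (c *\<^sub>v y) $ l \<noteq> 0")
    case True
    then obtain y2 l where "y2 \<in> carrier_vec n" "a *\<^sub>v y2 = 0\<^sub>v n" "l < n"
      "(c *\<^sub>v y) $ i * (c *\<^sub>v y2) $ l - (c *\<^sub>v y2) $ i * (c *\<^sub>v y) $ l \<noteq> 0" by blast
    then show ?thesis using shrinks_kernel_elementary[OF id abcd G y(1,3)] i by blast
  next
    case False
    then have "\<exists>\<mu>. x = \<mu> \<cdot>\<^sub>v y" if "x \<in> carrier_vec n" "a *\<^sub>v x = 0\<^sub>v n" for x
      using ker_a_spanned_if_minors_vanish[OF abcd G y(1,3) i _ that] by auto
    with corank_one_impossible[OF id two abcd G y] show ?thesis by blast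
  qed
qed

lemma shrinks_kernel_exists:
  assumes abcd: "sq a" "sq b" "sq c" "sq d" and G: "four_block_mat a b c d \<in> grpG \<sigma> n"
    and y: "y \<in> carrier_vec n" "y \<noteq> 0\<^sub>v n" "a *\<^sub>v y = 0\<^sub>v n"
  shows "\<exists>k \<phi>. shrinks_kernel a c y k \<phi>"
  using bar_cases shrinks_kernel_scalar[OF abcd G y] shrinks_kernel_identity[OF _ _ abcd G y] by blast

text \<open>Induction on the number of columns of a matrix Y whose range contains ker a; at the
  start Y is the identity.\<close>
lemma exists_skew_shift_invertible:
  "finite J \<Longrightarrow> sq a \<Longrightarrow> sq b \<Longrightarrow> sq c \<Longrightarrow> sq d \<Longrightarrow> four_block_mat a b c d \<in> grpG \<sigma> n \<Longrightarrow>
    sq Y \<Longrightarrow> (\<forall>r<n. \<forall>j<n. j \<notin> J \<longrightarrow> Y $$ (r,j) = 0) \<Longrightarrow>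
    (\<forall>x\<in>carrier_vec n. a *\<^sub>v x = 0\<^sub>v n \<longrightarrow> (\<exists>z\<in>carrier_vec n. x = Y *\<^sub>v z)) \<Longrightarrow>
    \<exists>k. sq k \<and> ct k = - k \<and> det (a - k * c) \<noteq> 0"
proof (induction "card J" arbitrary: J a b c d Y rule: less_induct)
  case less
  note abcd = less.prems(2-5) and G = less.prems(6) and range = less.prems(9)
  show ?case
  proof (cases "det a = 0")
    case False
    then show ?thesis using abcd by (intro exI[of _ "0\<^sub>m n n"]) (simp add: minus_zero mat_ring_simps)
  next
    case True
    then obtain y where y: "y \<in> carrier_vec n" "y \<noteq> 0\<^sub>v n" "a *\<^sub>v y = 0\<^sub>v n"
      using det_0_iff_vec_prod_zero_field[OF abcd(1)] by auto
    obtain k \<phi> where k: "sq k" "ct k = - k" and \<phi>: "\<phi> \<in> carrier_vec n" "\<phi> \<bullet> y \<noteq> 0"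
      and ker: "\<And>x. x \<in> carrier_vec n \<Longrightarrow> (a - k * c) *\<^sub>v x = 0\<^sub>v n \<Longrightarrow> a *\<^sub>v x = 0\<^sub>v n \<and> \<phi> \<bullet> x = 0"
      using shrinks_kernel_exists[OF abcd G y] unfolding shrinks_kernel_def by blast
    obtain z0 where z0: "z0 \<in> carrier_vec n" "y = Y *\<^sub>v z0" using range y by blast
    obtain i Y' where i: "i \<in> J" and Y': "sq Y'" "\<forall>r<n. \<forall>j<n. j \<notin> J - {i} \<longrightarrow> Y' $$ (r,j) = 0"
      "\<forall>z\<in>carrier_vec n. \<phi> \<bullet> (Y *\<^sub>v z) = 0 \<longrightarrow> Y' *\<^sub>v z = Y *\<^sub>v z"
      using column_support_shrink[OF less.prems(7,8) \<phi>(1) z0(1)] \<phi>(2) z0(2) by blast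
    have "\<exists>z\<in>carrier_vec n. x = Y' *\<^sub>v z" if "x \<in> carrier_vec n" "(a - k * c) *\<^sub>v x = 0\<^sub>v n" for x
      using ker[OF that] range that(1) Y'(3) by metis
    moreover have "card (J - {i}) < card J" using less.prems(1) i by (rule card_Diff1_less)
    ultimately obtain k' where k': "sq k'" "ct k' = - k'" "det (a - k * c - k' * c) \<noteq> 0"
      using less.hyps[of "J - {i}" "a - k * c" "b - k * d" c d Y'] less.prems(1) abcd k Y'
        V_shift_in_grpG[OF abcd k G] by auto
    have "ct (k + k') = - (k + k')" using k k' by (simp add: ct_sq_simps minus_add)
    moreover have "a - (k + k') * c = a - k * c - k' * c" using abcd k k' by (simp add: mat_ring_simps)
    ultimately show ?thesis using k k' by (metis sq_add)
  qed
qed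

abbreviation VVTVH :: "'a mat set" where
  "VVTVH \<equiv> {v1 * u * v2 * h | v1 u v2 h.
    v1 \<in> grpV \<sigma> n \<and> u \<in> grpVT \<sigma> n \<and> v2 \<in> grpV \<sigma> n \<and> h \<in> grpH \<sigma> n \<inter> grpG \<sigma> n}"

lemma four_block_in_VVTVH:
  assumes abcd: "sq a" "sq b" "sq c" "sq d" and G: "four_block_mat a b c d \<in> grpG \<sigma> n"
    and k: "sq k" "ct k = - k" "det (a - k * c) \<noteq> 0"
  shows "four_block_mat a b c d \<in> VVTVH"
proof -
  define a' where "a' = a - k * c"
  define b' where "b' = b - k * d"
  have a'b': "sq a'" "sq b'" unfolding a'_def b'_def using abcd k by auto
  have G': "four_block_mat a' b' c d \<in> grpG \<sigma> n"
    unfolding a'_def b'_def by (rule V_shift_in_grpG[OF abcd k(1,2) G])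
  obtain xi where xi: "sq xi" "a' * xi = 1\<^sub>m n" "xi * a' = 1\<^sub>m n"
    using det_nonzero_imp_inverse a'b'(1) k(3) unfolding a'_def by blast
  note F = factor_VT_V_diag[OF a'b' abcd(3,4) grpG_block_relations(1)[OF a'b' abcd(3,4) G'] xi]
  define h where "h = diag_block a' (ct xi)"
  have "four_block_mat a b c d = V_block k * four_block_mat a' b' c d"
    unfolding a'_def b'_def using abcd k by (simp add: V_block_mult mat_ring_simps)
  also have "\<dots> = V_block k * VT_block (c * xi) * V_block (b' * ct a') * h"
    unfolding F(3) h_def using abcd a'b' k xi by (simp add: double.m_assoc)
  finally have g: "four_block_mat a b c d = V_block k * VT_block (c * xi) * V_block (b' * ct a') * h" .
  have "det h = 1"
    using grpG_block_relations(9)[OF a'b' abcd(3,4) G'] a'b' abcd xi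
    unfolding F(3) h_def by (simp add: det_mult[of _ "n + n"] det_V_block det_VT_block)
  then have "h \<in> grpH \<sigma> n \<inter> grpG \<sigma> n"
    unfolding h_def grpH_def using a'b' xi by (auto intro!: four_block_in_grpG simp: mat_ring_simps)
  moreover have "V_block k \<in> grpV \<sigma> n" "VT_block (c * xi) \<in> grpVT \<sigma> n" "V_block (b' * ct a') \<in> grpV \<sigma> n"
    unfolding grpV_def grpVT_def using k F(1,2) abcd a'b' xi by auto
  ultimately show ?thesis unfolding g by blast
qed

lemma VVTVH_subset_grpG: "VVTVH \<subseteq> grpG \<sigma> n"
  unfolding grpV_def grpVT_def using V_block_in_grpG VT_block_in_grpG by (auto intro!: grpG_mult)

end


lemma admissible_bar_hermitian_blocks:
  assumes "admissible_bar (\<sigma> :: 'a::field \<Rightarrow> 'a)"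
  shows "hermitian_blocks \<sigma>"
proof (cases "\<sigma> = id")
  case False
  then have "field_aut \<sigma>" "\<forall>x. \<sigma> (\<sigma> x) = x"
    using assms unfolding admissible_bar_def by (auto simp: fun_eq_iff)
  then show ?thesis unfolding field_aut_def by unfold_locales auto
qed (unfold_locales, auto)

theorem lemma4p2:
  fixes \<sigma> :: "'a::field \<Rightarrow> 'a" and n :: nat
  assumes "n \<ge> 3" and "admissible_bar \<sigma>"
  shows "grpG \<sigma> n = {v1 * u * v2 * h | v1 u v2 h.
           v1 \<in> grpV \<sigma> n \<and> u \<in> grpVT \<sigma> n \<and> v2 \<in> grpV \<sigma> n \<and> h \<in> grpH \<sigma> n \<inter> grpG \<sigma> n}"
proof -
  interpret hermitian_blocks n \<sigma> using admissible_bar_hermitian_blocks[OF assms(2)] .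
  have "g \<in> VVTVH" if g: "g \<in> grpG \<sigma> n" for g
  proof -
    obtain a b c d where abcd: "g = four_block_mat a b c d" "sq a" "sq b" "sq c" "sq d"
      using g unfolding grpG_def by blast
    then obtain k where "sq k" "ct k = - k" "det (a - k * c) \<noteq> 0"
      using exists_skew_shift_invertible[of "{..<n}" a b c d "1\<^sub>m n"] g by auto
    then show ?thesis using four_block_in_VVTVH abcd g by blast
  qed
  then show ?thesis using VVTVH_subset_grpG by blast
qed

end
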